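(* Let $\kappa$ be an infinite cardinal and let $(F_\xi)_{\xi\in\kappa}$ be a family of nonempty finite sets. Then there exists a set $X$ such that (i) $|\{\xi\in\kappa:|F_\xi\cap X|=1\}|=\kappa$; and moreover $X$ can be chosen so that, in addition to (i): (ii) $|X|$ is equal to $1$, to $\mathrm{cf}(\kappa)$, or to $\kappa$; (iii) every subset $X'\subseteq X$ with $|X'|=|X|$ also satisfies $|\{\xi\in\kappa:|F_\xi\cap X'|=1\}|=\kappa$; (iv) for each $x\in X$ there is at least one $\xi\in\kappa$ with $F_\xi\cap X=\{x\}$.
   Context: $\mathrm{cf}(\kappa)$ denotes the cofinality of the cardinal $\kappa$. *)

theory Defs
  imports Main
begin

text \<open>card_of I is a cardinal well-order on I, i.e. the initial ordinal of the cardinal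
kappa = card of I.\<close>

definition has_card_cf :: "'b set \<Rightarrow> 'a set \<Rightarrow> bool" where
  "has_card_cf X I \<equiv>
     \<exists>K. K \<subseteq> I \<and> cofinal K (card_of I) \<and>
         (\<forall>K'. K' \<subseteq> I \<and> cofinal K' (card_of I) \<longrightarrow> (card_of K, card_of K') \<in> ordLeq) \<and>
         (card_of X, card_of K) \<in> ordIso"

end

(* If some point lies in kappa of the sets F xi, then X = {x} works. Otherwise every point lies
   in fewer than kappa of them; take a maximal pairwise disjoint subfamily (F xi) indexed by M.
   If |M| = kappa, one point from each member works. If |M| < kappa, the union W of that
   subfamily is smaller than kappa and meets every F xi. Fix a cofinal K of size cf(kappa) and
   bounds g k such that every part of K of full size yields a cofinal family of g k. By
   transfinite recursion along K choose pairwise disjoint traces A_k, i.e. sets of the form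
   F xi \<inter> W, each shared by more indices xi than there are below g k: this is possible because
   the traces chosen before are fewer than cf(kappa) finite sets, so their points lie in fewer
   than kappa of the sets F xi, while fewer than kappa traces exist altogether. One point of
   each A_k gives X of size cf(kappa), and every part of X of full size is still met in exactly
   one point by kappa of the F xi. *)

theory Submission
  imports Defs "HOL-Library.Disjoint_Sets"
    "HOL-Algebra.Free_Abelian_Groups" (* loads HOL-Cardinals.Cardinal_Arithmetic *)
begin

unbundle cardinal_syntax

lemma card_of_UNION_finite_ordLess_infinite:
  assumes "infinite B" and "finite J" and "\<And>j. j \<in> J \<Longrightarrow> |A j| <o |B|"
  shows "|\<Union>j\<in>J. A j| <o |B|"
  using assms(2,3)
proof (induction J rule: finite_induct)
  case empty
  then show ?case using assms(1) by simp
next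
  case (insert j J)
  then show ?case using card_of_Un_ordLess_infinite[OF assms(1)] by auto
qed

lemma card_of_UNION_of_finite_sets_ordLess_infinite:
  assumes B: "infinite B" and J: "|J| <o |B|" and fin: "\<And>j. j \<in> J \<Longrightarrow> finite (A j)"
  shows "|\<Union>j\<in>J. A j| <o |B|"
proof (cases "finite J")
  case True
  then show ?thesis using fin B by simp
next
  case False
  have "|\<Union>j\<in>J. A j| \<le>o |J|"
    using card_of_UNION_ordLeq_infinite[OF False ordLeq_refl[OF card_of_Card_order]] fin False
    by (metis finite_ordLess_infinite2 ordLess_imp_ordLeq)
  then show ?thesis using J by (rule ordLeq_ordLess_trans)
qed

lemma card_of_inj_on_image: "inj_on f A \<Longrightarrow> |f ` A| =o |A|"
  using card_of_ordIso inj_on_imp_bij_betw ordIso_symmetric by metis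

lemma card_of_Fpow_ordLess_infinite:
  assumes "infinite I" and "|W| <o |I|"
  shows "|Fpow W| <o |I|"
proof (cases "finite W")
  case True
  then have "finite (Fpow W)" by (simp add: Fpow_Pow_finite)
  then show ?thesis using assms(1) by simp
next
  case False
  then show ?thesis using assms(2) card_of_Fpow_infinite ordIso_ordLess_trans by blast
qed

lemma ordLess_imp_ordLeq_underS:
  assumes r: "Card_order r" and A: "|A| <o r"
  shows "\<exists>a\<in>Field r. |A| \<le>o |underS r a|"
proof -
  obtain a where a: "a \<in> Field r" and iso: "|A| =o Restr r (underS r a)"
    using A ordLess_iff_ordIso_Restr[OF card_order_on_well_order_on[OF r] card_of_Well_order] by blast
  have "|A| \<le>o |Field (Restr r (underS r a))|"
    using card_of_mono2[OF ordIso_imp_ordLeq[OF iso]] by simp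
  also have "|Field (Restr r (underS r a))| \<le>o |underS r a|"
    by (rule card_of_mono1) (auto simp: Field_def)
  finally show ?thesis using a by blast
qed

lemma card_of_under_ordLess_infinite:
  assumes "infinite K" and "k \<in> K"
  shows "|under (card_of K) k| <o |K|"
proof -
  have "under (card_of K) k = underS (card_of K) k \<union> {k}"
    using Refl_under_underS[OF wo_rel.REFL] wo_rel_def card_of_Well_order assms(2)
    by (metis Field_card_of)
  moreover have "|underS (card_of K) k| <o |K|"
    using card_of_underS[OF card_of_Card_order] assms(2) by simp
  ultimately show ?thesis
    using card_of_Un_singl_ordLess_infinite1[OF assms(1)] by (metis Un_commute)
qed

lemma not_cofinal_imp_bounded:
  assumes r: "Well_order r" and S: "S \<subseteq> Field r" and "\<not> cofinal S r"
  shows "\<exists>a\<in>Field r. \<forall>b\<in>S. (b, a) \<in> r"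
proof -
  obtain a where a: "a \<in> Field r" and above: "\<forall>b\<in>S. a = b \<or> (a, b) \<notin> r"
    using assms(3) unfolding cofinal_def by blast
  have "(b, a) \<in> r" if "b \<in> S" for b
    using above that a S wo_rel.REFL[of r] wo_rel.TOTALS[of r] r
    unfolding wo_rel_def by (metis subsetD)
  then show ?thesis using a by blast
qed

definition minimal_cofinal :: "'a set \<Rightarrow> 'a set \<Rightarrow> bool" where
  "minimal_cofinal I K \<longleftrightarrow> K \<subseteq> I \<and> cofinal K (card_of I) \<and>
     (\<forall>K'. K' \<subseteq> I \<and> cofinal K' (card_of I) \<longrightarrow> |K| \<le>o |K'| )"

lemma has_card_cf_if_minimal_cofinal:
  "minimal_cofinal I K \<Longrightarrow> |X| =o |K| \<Longrightarrow> has_card_cf X I"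
  unfolding minimal_cofinal_def has_card_cf_def by blast

lemma cofinal_imp_subset_UN_underS:
  "cofinal K r \<Longrightarrow> Field r \<subseteq> (\<Union>k\<in>K. underS r k)"
  unfolding cofinal_def underS_def by blast

lemma exists_minimal_cofinal:
  assumes "infinite I"
  shows "\<exists>K. minimal_cofinal I K"
proof -
  define \<K> where "\<K> = {K. K \<subseteq> I \<and> cofinal K (card_of I)}"
  have "cofinal I (card_of I)"
    unfolding cofinal_def using infinite_Card_order_limit[OF card_of_Card_order] assms
    by (metis Field_card_of)
  then have "card_of ` \<K> \<noteq> {}" unfolding \<K>_def by blast
  then obtain K where "K \<in> \<K>" and "\<forall>K'\<in>\<K>. |K| \<le>o |K'|"
    using exists_minim_Card_order[of "card_of ` \<K>"] card_of_Card_order by force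
  then show ?thesis unfolding minimal_cofinal_def \<K>_def by blast
qed

lemma infinite_if_cofinal:
  assumes I: "infinite I" and "K \<subseteq> I" and "cofinal K (card_of I)"
  shows "infinite K"
proof
  assume "finite K"
  have "|I| \<le>o |\<Union>k\<in>K. underS (card_of I) k|"
    using cofinal_imp_subset_UN_underS[OF assms(3)] by (intro card_of_mono1) simp
  also have "|\<Union>k\<in>K. underS (card_of I) k| <o |I|"
    using \<open>finite K\<close> I card_of_underS[OF card_of_Card_order] assms(2)
    by (intro card_of_UNION_finite_ordLess_infinite) auto
  finally show False by (simp add: ordLess_irreflexive)
qed

lemma bounded_if_ordLess_minimal_cofinal:
  assumes K: "minimal_cofinal I K" and S: "S \<subseteq> I" "|S| <o |K|"
  shows "\<exists>a\<in>I. \<forall>b\<in>S. (b, a) \<in> card_of I"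
proof -
  have "\<not> cofinal S (card_of I)"
    using K S not_ordLess_ordLeq unfolding minimal_cofinal_def by blast
  then show ?thesis
    using not_cofinal_imp_bounded[OF card_of_Well_order] S by simp
qed

lemma card_of_UNION_ordLess_cofinality:
  assumes I: "infinite I" and K: "minimal_cofinal I K"
    and P: "|P| <o |K|" and A: "\<And>p. p \<in> P \<Longrightarrow> |A p| <o |I|"
  shows "|\<Union>p\<in>P. A p| <o |I|"
proof -
  let ?r = "card_of I"
  have "\<forall>p\<in>P. \<exists>b. b \<in> I \<and> |A p| \<le>o |underS ?r b|"
    using ordLess_imp_ordLeq_underS[OF card_of_Card_order A] by fastforce
  then obtain f where f: "\<And>p. p \<in> P \<Longrightarrow> f p \<in> I \<and> |A p| \<le>o |underS ?r (f p)|"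
    by metis
  have "|f ` P| <o |K|" using card_of_image P by (rule ordLeq_ordLess_trans)
  then obtain a where a: "a \<in> I" and above: "\<And>p. p \<in> P \<Longrightarrow> (f p, a) \<in> ?r"
    using bounded_if_ordLess_minimal_cofinal[OF K, of "f ` P"] f by blast
  have "|A p| \<le>o |underS ?r a|" if "p \<in> P" for p
  proof -
    have "underS ?r (f p) \<subseteq> underS ?r a"
      using underS_incr[OF wo_rel.TRANS wo_rel.ANTISYM above[OF that]] card_of_Well_order
      unfolding wo_rel_def by blast
    then show ?thesis using f[OF that] card_of_mono1 ordLeq_transitive by metis
  qed
  then have "|SIGMA p:P. A p| \<le>o |P \<times> underS ?r a|"
    by (intro card_of_Sigma_mono1) blast
  with card_of_UNION_Sigma have "|\<Union>p\<in>P. A p| \<le>o |P \<times> underS ?r a|"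
    by (rule ordLeq_transitive)
  moreover have "|P \<times> underS ?r a| <o |I|"
  proof (rule card_of_Times_ordLess_infinite[OF I])
    show "|P| <o |I|"
      using P K card_of_mono1 ordLess_ordLeq_trans unfolding minimal_cofinal_def by blast
    show "|underS ?r a| <o |I|"
      using card_of_underS[OF card_of_Card_order] a by simp
  qed
  ultimately show ?thesis by (rule ordLeq_ordLess_trans)
qed

lemma exists_robust_cofinal_bounds:
  assumes I: "infinite I" and K: "minimal_cofinal I K"
  shows "\<exists>g. (\<forall>k\<in>K. g k \<in> I) \<and>
    (\<forall>K'. K' \<subseteq> K \<and> |K'| =o |K| \<longrightarrow> I \<subseteq> (\<Union>k\<in>K'. underS (card_of I) (g k)))"
proof -
  let ?r = "card_of I" and ?s = "card_of K"
  have KI: "K \<subseteq> I" and cof: "cofinal K ?r"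
    using K unfolding minimal_cofinal_def by auto
  have K_inf: "infinite K" using infinite_if_cofinal[OF I KI cof] .
  have wo_r: "wo_rel ?r" and wo_s: "wo_rel ?s" by (simp_all add: wo_rel_def)
  have "\<forall>k\<in>K. \<exists>b. b \<in> I \<and> (\<forall>j\<in>under ?s k. (j, b) \<in> ?r)"
  proof
    fix k assume "k \<in> K"
    have "under ?s k \<subseteq> I" using KI under_Field[of ?s k] by auto
    then show "\<exists>b. b \<in> I \<and> (\<forall>j\<in>under ?s k. (j, b) \<in> ?r)"
      using bounded_if_ordLess_minimal_cofinal[OF K _ card_of_under_ordLess_infinite[OF K_inf \<open>k \<in> K\<close>]]
      by blast
  qed
  then obtain g where g: "\<And>k. k \<in> K \<Longrightarrow> g k \<in> I \<and> (\<forall>j\<in>under ?s k. (j, g k) \<in> ?r)"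
    by metis
  \<comment> \<open>Initial segments of the cardinal order of K are smaller than K, so K' is unbounded in it.\<close>
  have "I \<subseteq> (\<Union>k\<in>K'. underS ?r (g k))" if K': "K' \<subseteq> K" "|K'| =o |K|" for K'
  proof
    fix i assume "i \<in> I"
    then obtain k0 where k0: "k0 \<in> K" "i \<noteq> k0" "(i, k0) \<in> ?r"
      using cof unfolding cofinal_def by auto
    have "\<not> K' \<subseteq> under ?s k0"
    proof
      assume "K' \<subseteq> under ?s k0"
      then have "|K'| <o |K|"
        using card_of_mono1 card_of_under_ordLess_infinite[OF K_inf k0(1)] ordLeq_ordLess_trans
        by blast
      then show False using K'(2) not_ordLess_ordIso by blast
    qed
    then obtain k where k: "k \<in> K'" "(k, k0) \<notin> ?s" unfolding under_def by blast
    then have "(k0, k) \<in> ?s"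
      using wo_rel.TOTALS[OF wo_s] k0(1) K'(1) by auto
    then have "(k0, g k) \<in> ?r" using g k K'(1) unfolding under_def by blast
    then have "(i, g k) \<in> ?r" and "i \<noteq> g k"
      using k0 wo_rel.TRANS[OF wo_r] wo_rel.ANTISYM[OF wo_r]
      by (auto dest: transD antisymD)
    then show "i \<in> (\<Union>k\<in>K'. underS ?r (g k))" using k by (auto simp: underS_def)
  qed
  then show ?thesis using g by blast
qed

definition hit_once :: "'i set \<Rightarrow> ('i \<Rightarrow> 'a set) \<Rightarrow> 'a set \<Rightarrow> 'i set" where
  "hit_once I F X = {\<xi> \<in> I. card (F \<xi> \<inter> X) = 1}"

definition robustly_hitting :: "'i set \<Rightarrow> ('i \<Rightarrow> 'a set) \<Rightarrow> 'a set \<Rightarrow> bool" where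
  "robustly_hitting I F X \<longleftrightarrow>
     (\<forall>X'. X' \<subseteq> X \<and> |X'| =o |X| \<longrightarrow> |hit_once I F X'| =o |I| )"

definition isolated_by :: "'i set \<Rightarrow> ('i \<Rightarrow> 'a set) \<Rightarrow> 'a set \<Rightarrow> bool" where
  "isolated_by I F X \<longleftrightarrow> (\<forall>x\<in>X. \<exists>\<xi>\<in>I. F \<xi> \<inter> X = {x})"

lemma robustly_hitting_isolated_image:
  assumes inj: "inj_on x K"
    and C_sub: "\<And>k. k \<in> K \<Longrightarrow> C k \<subseteq> I"
    and C_ne: "\<And>k. k \<in> K \<Longrightarrow> C k \<noteq> {}"
    and C_isolates: "\<And>k \<xi>. k \<in> K \<Longrightarrow> \<xi> \<in> C k \<Longrightarrow> F \<xi> \<inter> x ` K = {x k}"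
    and C_large: "\<And>K'. K' \<subseteq> K \<Longrightarrow> |K'| =o |K| \<Longrightarrow> |I| \<le>o |\<Union>k\<in>K'. C k|"
  shows "robustly_hitting I F (x ` K) \<and> isolated_by I F (x ` K)"
proof
  show "robustly_hitting I F (x ` K)"
    unfolding robustly_hitting_def
  proof (intro allI impI, elim conjE)
    fix X' assume sub: "X' \<subseteq> x ` K" and same: "|X'| =o |x ` K|"
    define K' where "K' = {k \<in> K. x k \<in> X'}"
    have "bij_betw x K' X'"
      using inj_on_subset[OF inj] sub unfolding K'_def bij_betw_def by (auto simp: image_iff)
    then have "|K'| =o |X'|" using card_of_ordIso by blast
    also note same
    also have "|x ` K| =o |K|" using inj by (rule card_of_inj_on_image)
    finally have "|K'| =o |K|" .
    moreover have "K' \<subseteq> K" unfolding K'_def by blast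
    ultimately have "|I| \<le>o |\<Union>k\<in>K'. C k|" using C_large by blast
    moreover have "(\<Union>k\<in>K'. C k) \<subseteq> hit_once I F X'"
    proof
      fix \<xi> assume "\<xi> \<in> (\<Union>k\<in>K'. C k)"
      then obtain k where k: "k \<in> K" "x k \<in> X'" "\<xi> \<in> C k" unfolding K'_def by blast
      then have "F \<xi> \<inter> X' = {x k}" using C_isolates[OF k(1,3)] sub by blast
      then show "\<xi> \<in> hit_once I F X'" using C_sub[OF k(1)] k(3) unfolding hit_once_def by auto
    qed
    ultimately have "|I| \<le>o |hit_once I F X'|" using card_of_mono1 ordLeq_transitive by blast
    moreover have "|hit_once I F X'| \<le>o |I|" unfolding hit_once_def by (rule card_of_mono1) blast
    ultimately show "|hit_once I F X'| =o |I|" by (simp add: ordIso_iff_ordLeq)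
  qed
  show "isolated_by I F (x ` K)"
    unfolding isolated_by_def
  proof
    fix y assume "y \<in> x ` K"
    then obtain k where k: "k \<in> K" "y = x k" by blast
    moreover obtain \<xi> where "\<xi> \<in> C k" using C_ne[OF k(1)] by blast
    ultimately show "\<exists>\<xi>\<in>I. F \<xi> \<inter> x ` K = {y}" using C_sub C_isolates by blast
  qed
qed

lemma singleton_robustly_hitting_isolated:
  assumes "I \<noteq> {}" and many: "|{\<xi> \<in> I. a \<in> F \<xi>}| =o |I|"
  shows "robustly_hitting I F {a} \<and> isolated_by I F {a}"
proof -
  have "{\<xi> \<in> I. a \<in> F \<xi>} \<noteq> {}"
    using assms card_of_ordIso[of _ I] by (metis bij_betw_empty1)
  moreover have "|I| \<le>o |\<Union>k\<in>K'. {\<xi> \<in> I. a \<in> F \<xi>}|"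
    if "K' \<subseteq> {a}" and "|K'| =o |{a}|" for K'
  proof -
    have "K' = {a}"
      using that card_of_ordIso[of K' "{a}"] by (metis bij_betw_empty1 insert_not_empty subset_singletonD)
    then show ?thesis using ordIso_iff_ordLeq[THEN iffD1, OF many] by simp
  qed
  ultimately show ?thesis
    using robustly_hitting_isolated_image[of id "{a}" "\<lambda>_. {\<xi> \<in> I. a \<in> F \<xi>}" I F] by simp
qed

lemma exists_maximal_disjoint_subfamily:
  assumes "\<And>\<xi>. \<xi> \<in> I \<Longrightarrow> F \<xi> \<noteq> {}"
  shows "\<exists>M\<subseteq>I. disjoint_family_on F M \<and> (\<forall>\<xi>\<in>I. F \<xi> \<inter> (\<Union>\<eta>\<in>M. F \<eta>) \<noteq> {})"
proof -
  define \<A> where "\<A> = {M. M \<subseteq> I \<and> pairwise (\<lambda>\<xi> \<eta>. F \<xi> \<inter> F \<eta> = {}) M}"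
  have "\<Union>\<C> \<in> \<A>" if "\<C> \<in> chains \<A>" for \<C>
  proof -
    have "\<C> \<subseteq> \<A>" and "chain\<^sub>\<subseteq> \<C>" using that unfolding chains_def by auto
    then show ?thesis unfolding \<A>_def by (auto intro: pairwise_chain_Union)
  qed
  then obtain M where M: "M \<in> \<A>" and maximal: "\<And>M'. M' \<in> \<A> \<Longrightarrow> M \<subseteq> M' \<Longrightarrow> M' = M"
    using Zorn_Lemma[of \<A>] by blast
  have "F \<xi> \<inter> (\<Union>\<eta>\<in>M. F \<eta>) \<noteq> {}" if "\<xi> \<in> I" for \<xi>
  proof
    assume disj: "F \<xi> \<inter> (\<Union>\<eta>\<in>M. F \<eta>) = {}"
    then have "insert \<xi> M \<in> \<A>"
      using M that by (auto simp: \<A>_def pairwise_insert)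
    then have "\<xi> \<in> M" using maximal[OF _ subset_insertI] by blast
    then show False using disj assms[OF that] by blast
  qed
  then show ?thesis
    using M unfolding \<A>_def disjoint_family_on_def pairwise_def by blast
qed

lemma disjoint_subfamily_robustly_hitting:
  assumes M: "M \<subseteq> I" and disj: "disjoint_family_on F M"
    and ne: "\<And>\<xi>. \<xi> \<in> M \<Longrightarrow> F \<xi> \<noteq> {}" and MI: "|M| =o |I|"
  shows "\<exists>X. robustly_hitting I F X \<and> isolated_by I F X \<and> |X| =o |I|"
proof -
  define c where "c \<xi> = (SOME y. y \<in> F \<xi>)" for \<xi>
  have c: "c \<xi> \<in> F \<xi>" if "\<xi> \<in> M" for \<xi>
    unfolding c_def using ne[OF that] by (simp add: some_in_eq)
  have shared: "\<xi> = \<eta>" if "\<xi> \<in> M" "\<eta> \<in> M" "c \<eta> \<in> F \<xi>" for \<xi> \<eta>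
    using disj that c[OF that(2)] unfolding disjoint_family_on_def by blast
  have inj: "inj_on c M"
  proof (rule inj_onI)
    fix \<xi> \<eta> assume "\<xi> \<in> M" "\<eta> \<in> M" "c \<xi> = c \<eta>"
    then show "\<xi> = \<eta>" using shared c by metis
  qed
  have "robustly_hitting I F (c ` M) \<and> isolated_by I F (c ` M)"
  proof (rule robustly_hitting_isolated_image[OF inj])
    show "F \<xi> \<inter> c ` M = {c k}" if "k \<in> M" "\<xi> \<in> {k}" for k \<xi>
      using that shared c by blast
    show "|I| \<le>o |\<Union>\<xi>\<in>K'. {\<xi>}|" if "K' \<subseteq> M" and "|K'| =o |M|" for K'
      using ordIso_imp_ordLeq[OF ordIso_symmetric[OF ordIso_transitive[OF that(2) MI]]] by simp
  qed (use M in auto)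
  moreover have "|c ` M| =o |I|"
    using ordIso_transitive[OF card_of_inj_on_image[OF inj] MI] .
  ultimately show ?thesis by blast
qed

lemma exists_large_trace_class:
  assumes I: "infinite I" and fin: "\<And>\<xi>. \<xi> \<in> I \<Longrightarrow> finite (F \<xi>)" and W: "|W| <o |I|"
    and P: "|{\<xi> \<in> I. F \<xi> \<inter> P \<noteq> {}}| <o |I|" and U: "|U| <o |I|"
  shows "\<exists>A. A \<inter> P = {} \<and> |U| <o |{\<xi> \<in> I. F \<xi> \<inter> W = A}|"
proof (rule ccontr)
  let ?C = "\<lambda>A. {\<xi> \<in> I. F \<xi> \<inter> W = A}" and ?E = "{\<xi> \<in> I. F \<xi> \<inter> P \<noteq> {}}"
  let ?T = "{A \<in> Fpow W. A \<inter> P = {}}"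
  assume "\<not> ?thesis"
  then have small: "|?C A| \<le>o |U|" if "A \<in> ?T" for A
    using that not_ordLess_iff_ordLeq[OF card_of_Well_order card_of_Well_order] by blast
  have "I - ?E \<subseteq> (\<Union>A\<in>?T. ?C A)"
    using fin by (auto simp: Fpow_def)
  then have "|I - ?E| \<le>o |\<Union>A\<in>?T. ?C A|" by (rule card_of_mono1)
  also have "|\<Union>A\<in>?T. ?C A| \<le>o |SIGMA A:?T. ?C A|" by (rule card_of_UNION_Sigma)
  also have "|SIGMA A:?T. ?C A| \<le>o |?T \<times> U|" using small by (intro card_of_Sigma_mono1) blast
  finally have "|I - ?E| \<le>o |?T \<times> U|" .
  moreover have "|?T \<times> U| <o |I|"
  proof (rule card_of_Times_ordLess_infinite[OF I _ U])
    have "|?T| \<le>o |Fpow W|" by (rule card_of_mono1) blast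
    then show "|?T| <o |I|" using card_of_Fpow_ordLess_infinite[OF I W] by (rule ordLeq_ordLess_trans)
  qed
  ultimately have "|I - ?E| <o |I|" by (rule ordLeq_ordLess_trans)
  then have "|?E \<union> (I - ?E)| <o |I|" by (rule card_of_Un_ordLess_infinite[OF I P])
  moreover have "?E \<union> (I - ?E) = I" by blast
  ultimately show False by (simp add: ordLess_irreflexive)
qed

lemma disjoint_transfinite_choice:
  assumes wo: "wo_rel s"
    and step: "\<And>k h. k \<in> Field s \<Longrightarrow> \<forall>j\<in>underS s k. Q j (h j) \<Longrightarrow>
      \<exists>A. Q k A \<and> (\<forall>j\<in>underS s k. A \<inter> h j = {})"
  shows "\<exists>f. (\<forall>k\<in>Field s. Q k (f k)) \<and> disjoint_family_on f (Field s)"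
proof -
  define H where "H h k = (SOME A. Q k A \<and> (\<forall>j\<in>underS s k. A \<inter> h j = {}))" for h k
  define f where "f = wo_rel.worec s H"
  have "H h k = H h' k" if "\<forall>j\<in>underS s k. h j = h' j" for h h' k
    unfolding H_def using that by (intro arg_cong[where f = Eps] ext) auto
  then have "wo_rel.adm_wo s H" unfolding wo_rel.adm_wo_def[OF wo] by blast
  then have "f = H f" unfolding f_def by (rule wo_rel.worec_fixpoint[OF wo])
  then have f_eq: "f k = H f k" for k by (rule fun_cong)
  have chosen: "k \<in> Field s \<longrightarrow> Q k (f k) \<and> (\<forall>j\<in>underS s k. f k \<inter> f j = {})" for k
  proof (induction k rule: wo_rel.well_order_induct[OF wo])
    case (1 k)
    show ?case
    proof
      assume k: "k \<in> Field s"
      have "\<forall>j\<in>underS s k. Q j (f j)"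
        using 1 by (auto simp: underS_def intro: FieldI1)
      then have "\<exists>A. Q k A \<and> (\<forall>j\<in>underS s k. A \<inter> f j = {})" by (rule step[OF k])
      then show "Q k (f k) \<and> (\<forall>j\<in>underS s k. f k \<inter> f j = {})"
        unfolding f_eq[of k] H_def by (rule someI_ex)
    qed
  qed
  have "f j \<inter> f k = {}" if "j \<in> Field s" "k \<in> Field s" "j \<noteq> k" for j k
  proof (cases "(j, k) \<in> s")
    case True
    then show ?thesis using chosen[of k] that by (auto simp: underS_def)
  next
    case False
    then have "(k, j) \<in> s" using wo_rel.TOTALS[OF wo] that by blast
    then show ?thesis using chosen[of j] that by (auto simp: underS_def)
  qed
  then show ?thesis using chosen unfolding disjoint_family_on_def by blast
qed

lemma exists_disjoint_large_traces:
  assumes I: "infinite I" and fin: "\<And>\<xi>. \<xi> \<in> I \<Longrightarrow> finite (F \<xi>)" and W: "|W| <o |I|"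
    and sparse: "\<And>x. |{\<xi> \<in> I. x \<in> F \<xi>}| <o |I|"
    and K: "minimal_cofinal I K" and U: "\<And>k. k \<in> K \<Longrightarrow> |U k| <o |I|"
  shows "\<exists>T. disjoint_family_on T K \<and> (\<forall>k\<in>K. |U k| <o |{\<xi> \<in> I. F \<xi> \<inter> W = T k}| )"
proof -
  let ?C = "\<lambda>A. {\<xi> \<in> I. F \<xi> \<inter> W = A}" and ?s = "card_of K"
  have K_inf: "infinite K"
    using K infinite_if_cofinal[OF I] unfolding minimal_cofinal_def by blast
  have "\<exists>A. |U k| <o |?C A| \<and> (\<forall>j\<in>underS ?s k. A \<inter> T j = {})"
    if k: "k \<in> Field ?s" and earlier: "\<forall>j\<in>underS ?s k. |U j| <o |?C (T j)|" for k T
  proof -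
    define P where "P = (\<Union>j\<in>underS ?s k. T j)"
    have "finite (T j)" if j: "j \<in> underS ?s k" for j
    proof -
      obtain \<xi> where "\<xi> \<in> I" "F \<xi> \<inter> W = T j"
        using card_of_empty5[OF earlier[rule_format, OF j]] by blast
      then show ?thesis using fin by (metis finite_Int)
    qed
    then have "|P| <o |K|"
      unfolding P_def using card_of_underS[OF card_of_Card_order] k
      by (intro card_of_UNION_of_finite_sets_ordLess_infinite[OF K_inf]) auto
    then have "|\<Union>x\<in>P. {\<xi> \<in> I. x \<in> F \<xi>}| <o |I|"
      by (rule card_of_UNION_ordLess_cofinality[OF I K _ sparse])
    moreover have "{\<xi> \<in> I. F \<xi> \<inter> P \<noteq> {}} = (\<Union>x\<in>P. {\<xi> \<in> I. x \<in> F \<xi>})" by blast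
    ultimately have "|{\<xi> \<in> I. F \<xi> \<inter> P \<noteq> {}}| <o |I|" by simp
    moreover have "|U k| <o |I|" using U k by simp
    ultimately obtain A where "A \<inter> P = {}" "|U k| <o |?C A|"
      using exists_large_trace_class[of I F W P "U k"] I fin W by blast
    then show ?thesis unfolding P_def by blast
  qed
  then obtain T where "\<forall>k\<in>Field ?s. |U k| <o |?C (T k)|" and "disjoint_family_on T (Field ?s)"
    using disjoint_transfinite_choice[of ?s "\<lambda>k A. |U k| <o |?C A|"] by (auto simp: wo_rel_def)
  then show ?thesis by auto
qed

lemma meeting_small_set_robustly_hitting:
  assumes I: "infinite I" and fin: "\<And>\<xi>. \<xi> \<in> I \<Longrightarrow> finite (F \<xi>)"
    and meets: "\<And>\<xi>. \<xi> \<in> I \<Longrightarrow> F \<xi> \<inter> W \<noteq> {}" and W: "|W| <o |I|"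
    and sparse: "\<And>x. |{\<xi> \<in> I. x \<in> F \<xi>}| <o |I|"
  shows "\<exists>X. robustly_hitting I F X \<and> isolated_by I F X \<and> has_card_cf X I"
proof -
  let ?r = "card_of I" and ?C = "\<lambda>A. {\<xi> \<in> I. F \<xi> \<inter> W = A}"
  obtain K where K: "minimal_cofinal I K" using exists_minimal_cofinal[OF I] ..
  obtain g where g: "\<forall>k\<in>K. g k \<in> I"
    and g_cofinal: "\<forall>K'. K' \<subseteq> K \<and> |K'| =o |K| \<longrightarrow> I \<subseteq> (\<Union>k\<in>K'. underS ?r (g k))"
    using exists_robust_cofinal_bounds[OF I K] by blast
  have "|underS ?r (g k)| <o |I|" if "k \<in> K" for k
    using card_of_underS[OF card_of_Card_order] g that by simp
  then obtain T where T_disj: "disjoint_family_on T K"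
    and T_large: "\<forall>k\<in>K. |underS ?r (g k)| <o |?C (T k)|"
    using exists_disjoint_large_traces[of I F W K "\<lambda>k. underS ?r (g k)"] I fin W sparse K
    by blast
  have T_trace: "\<exists>\<xi>\<in>I. F \<xi> \<inter> W = T k" if "k \<in> K" for k
    using card_of_empty5 T_large that by blast
  define x where "x k = (SOME y. y \<in> T k)" for k
  have x: "x k \<in> T k" if "k \<in> K" for k
    unfolding x_def using T_trace[OF that] meets by (metis some_in_eq)
  have x_W: "x k \<in> W" if "k \<in> K" for k
    using T_trace[OF that] x[OF that] by blast
  have shared: "j = k" if "j \<in> K" "k \<in> K" "x j \<in> T k" for j k
    using T_disj that x[OF that(1)] unfolding disjoint_family_on_def by blast
  have inj: "inj_on x K"
    by (rule inj_onI) (use shared x in metis)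
  have "robustly_hitting I F (x ` K) \<and> isolated_by I F (x ` K)"
  proof (rule robustly_hitting_isolated_image[OF inj])
    show "F \<xi> \<inter> x ` K = {x k}" if "k \<in> K" and "\<xi> \<in> ?C (T k)" for k \<xi>
      using that shared x x_W by blast
    show "?C (T k) \<noteq> {}" if "k \<in> K" for k
      using T_trace[OF that] by blast
    show "|I| \<le>o |\<Union>k\<in>K'. ?C (T k)|" if K': "K' \<subseteq> K" "|K'| =o |K|" for K'
    proof -
      have "|I| \<le>o |\<Union>k\<in>K'. underS ?r (g k)|"
        using g_cofinal K' by (intro card_of_mono1) blast
      also have "|\<Union>k\<in>K'. underS ?r (g k)| \<le>o |SIGMA k:K'. underS ?r (g k)|"
        by (rule card_of_UNION_Sigma)
      also have "|SIGMA k:K'. underS ?r (g k)| \<le>o |SIGMA k:K'. ?C (T k)|"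
        using K'(1) T_large ordLess_imp_ordLeq by (intro card_of_Sigma_mono1) blast
      also have "|SIGMA k:K'. ?C (T k)| \<le>o |\<Union>k\<in>K'. ?C (T k)|"
      proof (rule ordIso_imp_ordLeq[OF ordIso_symmetric[OF card_of_UNION_Sigma2]])
        show "?C (T i) \<inter> ?C (T j) = {}" if "{i, j} \<subseteq> K'" and "i \<noteq> j" for i j
        proof -
          have "T i \<noteq> T j" using shared[of i j] x[of i] that K'(1) by auto
          then show ?thesis by blast
        qed
      qed
      finally show ?thesis .
    qed
  qed auto
  moreover have "has_card_cf (x ` K) I"
    using has_card_cf_if_minimal_cofinal[OF K card_of_inj_on_image[OF inj]] .
  ultimately show ?thesis by blast
qed

lemma exists_robustly_hitting_isolated:
  assumes I: "infinite I" and F: "\<And>\<xi>. \<xi> \<in> I \<Longrightarrow> finite (F \<xi>) \<and> F \<xi> \<noteq> {}"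
  shows "\<exists>X. robustly_hitting I F X \<and> isolated_by I F X \<and>
    (card X = 1 \<or> has_card_cf X I \<or> |X| =o |I| )"
proof (cases "\<exists>a. |{\<xi> \<in> I. a \<in> F \<xi>}| =o |I|")
  case True
  then obtain a where "|{\<xi> \<in> I. a \<in> F \<xi>}| =o |I|" ..
  moreover have "I \<noteq> {}" using I by auto
  ultimately have "robustly_hitting I F {a} \<and> isolated_by I F {a}"
    by (intro singleton_robustly_hitting_isolated)
  then show ?thesis by (intro exI[of _ "{a}"]) simp
next
  case False
  have sparse: "|{\<xi> \<in> I. a \<in> F \<xi>}| <o |I|" for a
    using False card_of_mono1[of "{\<xi> \<in> I. a \<in> F \<xi>}" I] ordLeq_iff_ordLess_or_ordIso by blast
  have "\<exists>M\<subseteq>I. disjoint_family_on F M \<and> (\<forall>\<xi>\<in>I. F \<xi> \<inter> (\<Union>\<eta>\<in>M. F \<eta>) \<noteq> {})"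
    by (rule exists_maximal_disjoint_subfamily) (use F in blast)
  then obtain M where M: "M \<subseteq> I" and disj: "disjoint_family_on F M"
    and meets: "\<forall>\<xi>\<in>I. F \<xi> \<inter> (\<Union>\<eta>\<in>M. F \<eta>) \<noteq> {}"
    by blast
  show ?thesis
  proof (cases "|M| =o |I|")
    case True
    then show ?thesis using disjoint_subfamily_robustly_hitting[OF M disj] M F by blast
  next
    case False
    then have "|M| <o |I|"
      using card_of_mono1[OF M] ordLeq_iff_ordLess_or_ordIso by blast
    then have "|\<Union>\<eta>\<in>M. F \<eta>| <o |I|"
      using card_of_UNION_of_finite_sets_ordLess_infinite[OF I] M F by blast
    then show ?thesis
      using meeting_small_set_robustly_hitting[of I F "\<Union>\<eta>\<in>M. F \<eta>"] I F meets sparse by blast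
  qed
qed

theorem theorem2:
  fixes I :: "'i set" and F :: "'i \<Rightarrow> 'a set"
  assumes "infinite I"
    and "\<And>\<xi>. \<xi> \<in> I \<Longrightarrow> finite (F \<xi>) \<and> F \<xi> \<noteq> {}"
  shows "\<exists>X :: 'a set.
     (card_of {\<xi> \<in> I. card (F \<xi> \<inter> X) = 1}, card_of I) \<in> ordIso \<and>
     (card X = 1 \<or> has_card_cf X I \<or> (card_of X, card_of I) \<in> ordIso) \<and>
     (\<forall>X'. X' \<subseteq> X \<and> (card_of X', card_of X) \<in> ordIso \<longrightarrow> (card_of {\<xi> \<in> I. card (F \<xi> \<inter> X') = 1}, card_of I) \<in> ordIso) \<and>
     (\<forall>x\<in>X. \<exists>\<xi>\<in>I. F \<xi> \<inter> X = {x})"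
proof -
  obtain X where hitting: "robustly_hitting I F X" and "isolated_by I F X"
    and "card X = 1 \<or> has_card_cf X I \<or> |X| =o |I|"
    using exists_robustly_hitting_isolated[of I F] assms by blast
  moreover have "|hit_once I F X| =o |I|"
    using hitting ordIso_reflexive[OF card_of_Well_order] unfolding robustly_hitting_def by blast
  ultimately show ?thesis
    unfolding robustly_hitting_def isolated_by_def hit_once_def by blast
qed

end
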